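(* Let $\mathcal{G}=(\mathcal{V},\mathcal{E})$ be a directed graph with terminals $s,t$, $f:2^{\mathcal{E}}\to\mathbb{R}_+$ normalized, monotone nondecreasing and submodular, and $C^*$ an $(s,t)$-cut minimizing $f$. Consider the deterministic greedy heuristic: start with $C=\emptyset$, $y=0\in\{0,1\}^{\mathcal{E}}$; while the shortest $(s,t)$-path $P_{\min}$ with respect to edge lengths $y$ has $\sum_{e\in P_{\min}}y(e)<1$, add to $C$ an edge of $P_{\min}$ with minimum marginal cost $f(e\mid C)$ and set its $y$-value to $1$; let $\widehat C_d$ be the returned solution. Then $f(\widehat C_d)\le |\widehat C_d|\,f(C^* )$, and this approximation factor cannot be improved in general.
   Context: An $(s,t)$-cut is a set of edges whose removal disconnects all $s$-$t$ paths. $f(e\mid C)=f(C\cup\{e\})-f(C)$. *)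

theory Defs
  imports Main "HOL.Real"
begin

definition st_path :: "('v \<times> 'v) set \<Rightarrow> 'v \<Rightarrow> 'v \<Rightarrow> ('v \<times> 'v) list \<Rightarrow> bool" where
  "st_path E s t P \<longleftrightarrow>
     (\<exists>vs. vs \<noteq> [] \<and> distinct vs \<and> hd vs = s \<and> last vs = t \<and>
           P = zip vs (tl vs) \<and> set P \<subseteq> E)"

definition st_cut :: "('v \<times> 'v) set \<Rightarrow> 'v \<Rightarrow> 'v \<Rightarrow> ('v \<times> 'v) set \<Rightarrow> bool" where
  "st_cut E s t C \<longleftrightarrow> C \<subseteq> E \<and> (\<forall>P. st_path E s t P \<longrightarrow> set P \<inter> C \<noteq> {})"

definition min_st_cut :: "('v \<times> 'v) set \<Rightarrow> 'v \<Rightarrow> 'v \<Rightarrow> (('v \<times> 'v) set \<Rightarrow> real)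
    \<Rightarrow> ('v \<times> 'v) set \<Rightarrow> bool" where
  "min_st_cut E s t f C \<longleftrightarrow> st_cut E s t C \<and> (\<forall>C'. st_cut E s t C' \<longrightarrow> f C \<le> f C')"

definition normalized_nonneg :: "'e set \<Rightarrow> ('e set \<Rightarrow> real) \<Rightarrow> bool" where
  "normalized_nonneg E f \<longleftrightarrow> f {} = 0 \<and> (\<forall>A. A \<subseteq> E \<longrightarrow> 0 \<le> f A)"

definition monotone_setfun :: "'e set \<Rightarrow> ('e set \<Rightarrow> real) \<Rightarrow> bool" where
  "monotone_setfun E f \<longleftrightarrow> (\<forall>A B. A \<subseteq> B \<longrightarrow> B \<subseteq> E \<longrightarrow> f A \<le> f B)"

definition submodular :: "'e set \<Rightarrow> ('e set \<Rightarrow> real) \<Rightarrow> bool" where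
  "submodular E f \<longleftrightarrow>
     (\<forall>A B. A \<subseteq> E \<longrightarrow> B \<subseteq> E \<longrightarrow> f (A \<union> B) + f (A \<inter> B) \<le> f A + f B)"

definition marginal :: "('e set \<Rightarrow> real) \<Rightarrow> 'e \<Rightarrow> 'e set \<Rightarrow> real" where
  "marginal f e C = f (insert e C) - f C"

text \<open>Edge lengths y \<in> {0,1}^E: y(e) = 1 iff e has been added to C.\<close>
definition ylen :: "('v \<times> 'v) set \<Rightarrow> ('v \<times> 'v) list \<Rightarrow> real" where
  "ylen C P = (\<Sum>e\<leftarrow>P. if e \<in> C then 1 else 0)"

definition shortest_st_path :: "('v \<times> 'v) set \<Rightarrow> 'v \<Rightarrow> 'v \<Rightarrow> ('v \<times> 'v) set
    \<Rightarrow> ('v \<times> 'v) list \<Rightarrow> bool" where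
  "shortest_st_path E s t C P \<longleftrightarrow>
     st_path E s t P \<and> (\<forall>Q. st_path E s t Q \<longrightarrow> ylen C P \<le> ylen C Q)"

text \<open>One iteration of the deterministic greedy heuristic (any tie-breaking):
  a shortest path P_min with length < 1 exists, and an edge of P_min with
  minimum marginal cost is added to C.\<close>
definition greedy_step :: "('v \<times> 'v) set \<Rightarrow> 'v \<Rightarrow> 'v \<Rightarrow> (('v \<times> 'v) set \<Rightarrow> real)
    \<Rightarrow> ('v \<times> 'v) set \<Rightarrow> ('v \<times> 'v) set \<Rightarrow> bool" where
  "greedy_step E s t f C C' \<longleftrightarrow>
     (\<exists>P e. shortest_st_path E s t C P \<and> ylen C P < 1 \<and> e \<in> set P \<and>
            (\<forall>e'\<in>set P. marginal f e C \<le> marginal f e' C) \<and> C' = insert e C)"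

definition greedy_stops :: "('v \<times> 'v) set \<Rightarrow> 'v \<Rightarrow> 'v \<Rightarrow> ('v \<times> 'v) set \<Rightarrow> bool" where
  "greedy_stops E s t C \<longleftrightarrow> \<not> (\<exists>P. shortest_st_path E s t C P \<and> ylen C P < 1)"

definition greedy_output :: "('v \<times> 'v) set \<Rightarrow> 'v \<Rightarrow> 'v \<Rightarrow> (('v \<times> 'v) set \<Rightarrow> real)
    \<Rightarrow> ('v \<times> 'v) set \<Rightarrow> bool" where
  "greedy_output E s t f Ch \<longleftrightarrow> (greedy_step E s t f)\<^sup>*\<^sup>* {} Ch \<and> greedy_stops E s t Ch"

definition cut_instance :: "'v set \<Rightarrow> ('v \<times> 'v) set \<Rightarrow> 'v \<Rightarrow> 'v \<Rightarrow> (('v \<times> 'v) set \<Rightarrow> real) \<Rightarrow> bool" where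
  "cut_instance V E s t f \<longleftrightarrow> finite V \<and> E \<subseteq> V \<times> V \<and> s \<in> V \<and> t \<in> V \<and> s \<noteq> t \<and>
     normalized_nonneg E f \<and> monotone_setfun E f \<and> submodular E f"

end

theory Submission
  imports Defs
begin

text \<open>Each greedy step adds an edge of an \<open>(s,t)\<close>-path \<open>P\<close> disjoint from the current
  solution \<open>C\<close>. Since \<open>P\<close> meets the optimal cut \<open>C\<^sup>*\<close> in some edge \<open>e'\<close>, greedy choice,
  submodularity and monotonicity bound the added cost by \<open>f(e' | C) \<le> f {e'} \<le> f C\<^sup>*\<close>.

  For tightness take \<open>k\<close> parallel paths \<open>s \<rightarrow> v \<rightarrow> t\<close> and let a set of edges cost
  \<open>c = 1 + \<epsilon>/k\<close> once it contains some first edge, plus the number of second edges it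
  contains. A first edge always has marginal cost \<open>c > 1\<close>, so the greedy cuts all \<open>k\<close>
  second edges at cost \<open>k\<close>, while the first edges form a cut of cost \<open>c\<close>.\<close>

lemma ylen_Cons: "ylen C (e # P) = (if e \<in> C then 1 else 0) + ylen C P"
  by (simp add: ylen_def)

lemma ylen_nonneg: "0 \<le> ylen C P"
  by (induction P) (simp_all add: ylen_def)

lemma ylen_ge_1: "e \<in> set P \<Longrightarrow> e \<in> C \<Longrightarrow> 1 \<le> ylen C P"
  by (induction P) (auto simp: ylen_Cons add_increasing ylen_nonneg)

lemma ylen_less_1_disjoint: "ylen C P < 1 \<Longrightarrow> set P \<inter> C = {}"
  using ylen_ge_1 by fastforce

lemma marginal_le_singleton:
  assumes "submodular E f" "f {} = 0" "C \<subseteq> E" "e \<in> E" "e \<notin> C"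
  shows "marginal f e C \<le> f {e}"
proof -
  have "f (C \<union> {e}) + f (C \<inter> {e}) \<le> f C + f {e}"
    using assms(1,3,4) unfolding submodular_def by blast
  moreover have "C \<inter> {e} = {}" using assms(5) by blast
  ultimately show ?thesis using assms(2) by (simp add: marginal_def)
qed

lemma greedy_step_increment:
  assumes inst: "cut_instance V E s t f" and cut: "st_cut E s t Cstar"
    and CE: "C \<subseteq> E" and step: "greedy_step E s t f C C'"
  shows "\<exists>e \<in> E - C. C' = insert e C \<and> f C' \<le> f C + f Cstar"
proof -
  obtain P e where sp: "shortest_st_path E s t C P" and short: "ylen C P < 1"
    and eP: "e \<in> set P" and greedy: "\<forall>e'\<in>set P. marginal f e C \<le> marginal f e' C"
    and C': "C' = insert e C"
    using step unfolding greedy_step_def by blast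
  have path: "st_path E s t P" using sp unfolding shortest_st_path_def by blast
  then have PE: "set P \<subseteq> E" unfolding st_path_def by blast
  have PC: "set P \<inter> C = {}" using ylen_less_1_disjoint[OF short] .
  obtain e' where e'P: "e' \<in> set P" and e'Cstar: "e' \<in> Cstar"
    using cut path unfolding st_cut_def by blast
  have f: "submodular E f" "monotone_setfun E f" "normalized_nonneg E f"
    using inst by (auto simp: cut_instance_def)
  have "marginal f e C \<le> marginal f e' C" using greedy e'P by blast
  also have "\<dots> \<le> f {e'}"
  proof (rule marginal_le_singleton[OF f(1) _ CE])
    show "f {} = 0" using f(3) by (simp add: normalized_nonneg_def)
    show "e' \<in> E" "e' \<notin> C" using e'P PE PC by blast+
  qed
  also have "\<dots> \<le> f Cstar"
    using f(2) e'Cstar cut unfolding monotone_setfun_def st_cut_def by simp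
  finally have "f C' \<le> f C + f Cstar" using C' by (simp add: marginal_def)
  moreover have "e \<in> E - C" using eP PE PC by blast
  ultimately show ?thesis using C' by blast
qed

lemma greedy_reachable_bound:
  assumes "cut_instance V E s t f" "st_cut E s t Cstar"
    and "(greedy_step E s t f)\<^sup>*\<^sup>* {} C"
  shows "finite C \<and> C \<subseteq> E \<and> f C \<le> real (card C) * f Cstar"
  using assms(3)
proof (induction rule: rtranclp_induct)
  case base
  then show ?case using assms(1) by (simp add: cut_instance_def normalized_nonneg_def)
next
  case (step C C')
  then obtain e where "e \<in> E - C" "C' = insert e C" "f C' \<le> f C + f Cstar"
    using greedy_step_increment[OF assms(1,2)] by blast
  then show ?case using step.IH by (simp add: algebra_simps)
qed

theorem greedy_cut_approximation:
  assumes "cut_instance V E s t f" "min_st_cut E s t f Cstar" "greedy_output E s t f Ch"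
  shows "f Ch \<le> real (card Ch) * f Cstar"
  using greedy_reachable_bound[OF assms(1)] assms(2,3)
  unfolding min_st_cut_def greedy_output_def by blast

lemma submodular_add:
  "submodular E f \<Longrightarrow> submodular E g \<Longrightarrow> submodular E (\<lambda>A. f A + g A)"
  unfolding submodular_def by (smt (verit))

lemma monotone_setfun_add:
  "monotone_setfun E f \<Longrightarrow> monotone_setfun E g \<Longrightarrow> monotone_setfun E (\<lambda>A. f A + g A)"
  unfolding monotone_setfun_def by (smt (verit))

lemma submodular_card_Int:
  assumes "finite B"
  shows "submodular E (\<lambda>A. real (card (A \<inter> B)))"
  unfolding submodular_def
proof (intro allI impI)
  fix A A'
  have "card ((A \<inter> B) \<union> (A' \<inter> B)) + card ((A \<inter> B) \<inter> (A' \<inter> B)) = card (A \<inter> B) + card (A' \<inter> B)"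
    using card_Un_Int[of "A \<inter> B" "A' \<inter> B"] assms by simp
  moreover have "(A \<inter> B) \<union> (A' \<inter> B) = (A \<union> A') \<inter> B" "(A \<inter> B) \<inter> (A' \<inter> B) = (A \<inter> A') \<inter> B"
    by blast+
  ultimately show "real (card ((A \<union> A') \<inter> B)) + real (card ((A \<inter> A') \<inter> B))
      \<le> real (card (A \<inter> B)) + real (card (A' \<inter> B))"
    by (metis of_nat_add order_refl)
qed

lemma monotone_setfun_card_Int:
  "finite B \<Longrightarrow> monotone_setfun E (\<lambda>A. real (card (A \<inter> B)))"
  unfolding monotone_setfun_def by (auto intro: card_mono)

lemma submodular_hitting:
  "0 \<le> c \<Longrightarrow> submodular E (\<lambda>A. if A \<inter> T \<noteq> {} then c else 0)"
  unfolding submodular_def by auto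

lemma monotone_setfun_hitting:
  "0 \<le> c \<Longrightarrow> monotone_setfun E (\<lambda>A. if A \<inter> T \<noteq> {} then c else 0)"
  unfolding monotone_setfun_def by auto

text \<open>Vertex \<open>0\<close> plays \<open>s\<close>, vertex \<open>1\<close> plays \<open>t\<close>, and the \<open>k\<close> parallel paths pass through
  the vertices \<open>2, \<dots>, k + 1\<close>.\<close>

definition top_edges :: "nat \<Rightarrow> (nat \<times> nat) set" where
  "top_edges k = (\<lambda>v. (0, v)) ` {2..<k+2}"

definition bottom_edges :: "nat \<Rightarrow> (nat \<times> nat) set" where
  "bottom_edges k = (\<lambda>v. (v, 1)) ` {2..<k+2}"

definition parallel_edges :: "nat \<Rightarrow> (nat \<times> nat) set" where
  "parallel_edges k = top_edges k \<union> bottom_edges k"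

definition tight_cost :: "nat \<Rightarrow> real \<Rightarrow> (nat \<times> nat) set \<Rightarrow> real" where
  "tight_cost k c A = (if A \<inter> top_edges k \<noteq> {} then c else 0) + real (card (A \<inter> bottom_edges k))"

lemma finite_bottom_edges: "finite (bottom_edges k)"
  by (simp add: bottom_edges_def)

lemma card_bottom_edges: "card (bottom_edges k) = k"
  by (simp add: bottom_edges_def card_image inj_on_def)

lemma top_edges_Int_bottom_edges: "top_edges k \<inter> bottom_edges k = {}"
  by (auto simp: top_edges_def bottom_edges_def)

lemma mem_parallel_edges_iff:
  "(a, b) \<in> parallel_edges k \<longleftrightarrow> a = 0 \<and> b \<in> {2..<k+2} \<or> a \<in> {2..<k+2} \<and> b = 1"
  by (auto simp: parallel_edges_def top_edges_def bottom_edges_def)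

lemma st_path_parallel_iff:
  "st_path (parallel_edges k) 0 1 P \<longleftrightarrow> (\<exists>v \<in> {2..<k+2}. P = [(0, v), (v, 1)])"
proof
  assume "st_path (parallel_edges k) 0 1 P"
  then obtain vs where vs: "vs \<noteq> []" "distinct vs" "hd vs = 0" "last vs = 1"
    and P: "P = zip vs (tl vs)" and PE: "set P \<subseteq> parallel_edges k"
    unfolding st_path_def by blast
  then obtain w where w: "vs = 0 # w" by (cases vs) auto
  with vs obtain v w' where v: "w = v # w'" by (cases w) auto
  with P PE w have v_range: "v \<in> {2..<k+2}" by (simp add: mem_parallel_edges_iff)
  with vs w v obtain u w'' where u: "w' = u # w''" by (cases w') auto
  with P PE w v v_range have u1: "u = 1" by (auto simp: mem_parallel_edges_iff)
  have "w'' = []"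
  proof (cases w'')
    case (Cons x xs)
    with P PE w v u u1 show ?thesis by (auto simp: mem_parallel_edges_iff)
  qed
  with P w v u u1 v_range show "\<exists>v \<in> {2..<k+2}. P = [(0, v), (v, 1)]" by auto
next
  assume "\<exists>v \<in> {2..<k+2}. P = [(0, v), (v, 1)]"
  then obtain v where "v \<in> {2..<k+2}" "P = [(0, v), (v, 1)]" by blast
  then show "st_path (parallel_edges k) 0 1 P" unfolding st_path_def
    by (intro exI[of _ "[0, v, 1]"]) (auto simp: mem_parallel_edges_iff)
qed

lemma st_cut_parallel_iff:
  "st_cut (parallel_edges k) 0 1 C \<longleftrightarrow>
     C \<subseteq> parallel_edges k \<and> (\<forall>v \<in> {2..<k+2}. (0, v) \<in> C \<or> (v, 1) \<in> C)"
  unfolding st_cut_def st_path_parallel_iff by auto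

lemma ylen_parallel_path:
  assumes "C \<subseteq> bottom_edges k"
  shows "ylen C [(0, v), (v, 1)] = (if (v, 1) \<in> C then 1 else 0)"
proof -
  have "(0, v) \<notin> C" using assms by (auto simp: bottom_edges_def)
  then show ?thesis by (simp add: ylen_def)
qed

lemma tight_cost_bottom_subset:
  "C \<subseteq> bottom_edges k \<Longrightarrow> tight_cost k c C = real (card C)"
  using top_edges_Int_bottom_edges unfolding tight_cost_def by (auto simp: Int_absorb2)

lemma marginal_tight_cost_top:
  assumes "C \<subseteq> bottom_edges k" "v \<in> {2..<k+2}"
  shows "marginal (tight_cost k c) (0, v) C = c"
proof -
  have "(0, v) \<in> top_edges k" "(0, v) \<notin> bottom_edges k"
    using assms(2) by (auto simp: top_edges_def bottom_edges_def)
  then have "tight_cost k c (insert (0, v) C) = c + real (card C)"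
    using assms(1) unfolding tight_cost_def by (auto simp: Int_absorb2 Int_insert_left)
  then show ?thesis using tight_cost_bottom_subset[OF assms(1)] by (simp add: marginal_def)
qed

lemma marginal_tight_cost_bottom:
  assumes "C \<subseteq> bottom_edges k" "v \<in> {2..<k+2}" "(v, 1) \<notin> C"
  shows "marginal (tight_cost k c) (v, 1) C = 1"
proof -
  have vB: "(v, 1) \<in> bottom_edges k" using assms(2) by (auto simp: bottom_edges_def)
  have "finite C" using assms(1) finite_bottom_edges finite_subset by blast
  then show ?thesis
    using tight_cost_bottom_subset[of "insert (v, 1) C"] tight_cost_bottom_subset[of C] assms vB
    by (simp add: marginal_def)
qed

lemma greedy_step_parallel_iff:
  assumes "1 < c" "C \<subseteq> bottom_edges k"
  shows "greedy_step (parallel_edges k) 0 1 (tight_cost k c) C C' \<longleftrightarrow>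
    (\<exists>x \<in> bottom_edges k - C. C' = insert x C)"
proof
  assume "greedy_step (parallel_edges k) 0 1 (tight_cost k c) C C'"
  then obtain P e where sp: "shortest_st_path (parallel_edges k) 0 1 C P"
    and short: "ylen C P < 1" and eP: "e \<in> set P"
    and greedy: "\<forall>e' \<in> set P. marginal (tight_cost k c) e C \<le> marginal (tight_cost k c) e' C"
    and C': "C' = insert e C"
    unfolding greedy_step_def by blast
  obtain v where v: "v \<in> {2..<k+2}" and P: "P = [(0, v), (v, 1)]"
    using sp st_path_parallel_iff unfolding shortest_st_path_def by blast
  have "(v, 1) \<notin> C" using short ylen_parallel_path[OF assms(2)] P by fastforce
  then have "e \<noteq> (0, v)"
    using greedy P marginal_tight_cost_top[OF assms(2) v] marginal_tight_cost_bottom[OF assms(2) v]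
      assms(1) by force
  then have "e = (v, 1)" using eP P by auto
  moreover have "(v, 1) \<in> bottom_edges k" using v by (auto simp: bottom_edges_def)
  ultimately show "\<exists>x \<in> bottom_edges k - C. C' = insert x C"
    using C' \<open>(v, 1) \<notin> C\<close> by blast
next
  assume "\<exists>x \<in> bottom_edges k - C. C' = insert x C"
  then obtain v where v: "v \<in> {2..<k+2}" "(v, 1) \<notin> C" and C': "C' = insert (v, 1) C"
    by (auto simp: bottom_edges_def)
  let ?P = "[(0, v), (v, 1)]"
  have "ylen C ?P = 0" using ylen_parallel_path[OF assms(2)] v by simp
  then have "shortest_st_path (parallel_edges k) 0 1 C ?P"
    using st_path_parallel_iff v ylen_nonneg unfolding shortest_st_path_def by fastforce
  moreover have "\<forall>e' \<in> set ?P. marginal (tight_cost k c) (v, 1) C \<le> marginal (tight_cost k c) e' C"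
    using marginal_tight_cost_top[OF assms(2) v(1)] marginal_tight_cost_bottom[OF assms(2) v]
      assms(1) by auto
  ultimately show "greedy_step (parallel_edges k) 0 1 (tight_cost k c) C C'"
    unfolding greedy_step_def using \<open>ylen C ?P = 0\<close> C' by (intro exI[of _ ?P]) auto
qed

lemma greedy_reachable_parallel_iff:
  assumes "1 < c"
  shows "(greedy_step (parallel_edges k) 0 1 (tight_cost k c))\<^sup>*\<^sup>* {} C \<longleftrightarrow> C \<subseteq> bottom_edges k"
proof
  assume "(greedy_step (parallel_edges k) 0 1 (tight_cost k c))\<^sup>*\<^sup>* {} C"
  then show "C \<subseteq> bottom_edges k"
  proof (induction rule: rtranclp_induct)
    case (step C C')
    from step.hyps(2) obtain x where "x \<in> bottom_edges k" "C' = insert x C"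
      unfolding greedy_step_parallel_iff[OF assms step.IH] by blast
    with step.IH show ?case by blast
  qed simp
next
  assume C: "C \<subseteq> bottom_edges k"
  then have "finite C" using finite_bottom_edges finite_subset by blast
  then show "(greedy_step (parallel_edges k) 0 1 (tight_cost k c))\<^sup>*\<^sup>* {} C" using C
  proof (induction C rule: finite_induct)
    case (insert x C)
    then have C: "C \<subseteq> bottom_edges k" by blast
    have "greedy_step (parallel_edges k) 0 1 (tight_cost k c) C (insert x C)"
      unfolding greedy_step_parallel_iff[OF assms C] using insert by blast
    with insert.IH[OF C] show ?case by (rule rtranclp.rtrancl_into_rtrancl)
  qed simp
qed

lemma greedy_stops_parallel_iff:
  assumes "C \<subseteq> bottom_edges k"
  shows "greedy_stops (parallel_edges k) 0 1 C \<longleftrightarrow> C = bottom_edges k"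
proof
  assume stops: "greedy_stops (parallel_edges k) 0 1 C"
  show "C = bottom_edges k"
  proof (rule ccontr)
    assume "C \<noteq> bottom_edges k"
    then obtain x where "x \<in> bottom_edges k - C" using assms by blast
    then obtain v where v: "v \<in> {2..<k+2}" "(v, 1) \<notin> C" by (auto simp: bottom_edges_def)
    let ?P = "[(0, v), (v, 1)]"
    have "ylen C ?P = 0" using ylen_parallel_path[OF assms] v by simp
    then have "shortest_st_path (parallel_edges k) 0 1 C ?P"
      using st_path_parallel_iff v ylen_nonneg unfolding shortest_st_path_def by fastforce
    then show False using stops \<open>ylen C ?P = 0\<close> unfolding greedy_stops_def by auto
  qed
next
  assume C: "C = bottom_edges k"
  show "greedy_stops (parallel_edges k) 0 1 C"
    unfolding greedy_stops_def
  proof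
    assume "\<exists>P. shortest_st_path (parallel_edges k) 0 1 C P \<and> ylen C P < 1"
    then obtain P where "st_path (parallel_edges k) 0 1 P" and short: "ylen C P < 1"
      by (auto simp: shortest_st_path_def)
    then obtain v where "v \<in> {2..<k+2}" "P = [(0, v), (v, 1)]"
      using st_path_parallel_iff by blast
    then have "ylen C P = 1" using ylen_parallel_path[OF assms] C by (simp add: bottom_edges_def)
    with short show False by simp
  qed
qed

lemma greedy_output_parallel_iff:
  assumes "1 < c"
  shows "greedy_output (parallel_edges k) 0 1 (tight_cost k c) Ch \<longleftrightarrow> Ch = bottom_edges k"
proof -
  have "greedy_output (parallel_edges k) 0 1 (tight_cost k c) Ch \<longleftrightarrow>
      Ch \<subseteq> bottom_edges k \<and> greedy_stops (parallel_edges k) 0 1 Ch"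
    unfolding greedy_output_def greedy_reachable_parallel_iff[OF assms] ..
  also have "\<dots> \<longleftrightarrow> Ch = bottom_edges k"
    using greedy_stops_parallel_iff[of Ch k] by blast
  finally show ?thesis .
qed

lemma cut_instance_parallel:
  assumes "0 \<le> c"
  shows "cut_instance {0..<k+2} (parallel_edges k) 0 1 (tight_cost k c)"
proof -
  have "tight_cost k c = (\<lambda>A. (if A \<inter> top_edges k \<noteq> {} then c else 0) + real (card (A \<inter> bottom_edges k)))"
    by (simp add: tight_cost_def fun_eq_iff)
  then have "submodular (parallel_edges k) (tight_cost k c)"
    "monotone_setfun (parallel_edges k) (tight_cost k c)"
    using assms finite_bottom_edges
    by (simp_all add: submodular_add submodular_hitting submodular_card_Int
        monotone_setfun_add monotone_setfun_hitting monotone_setfun_card_Int)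
  moreover have "normalized_nonneg (parallel_edges k) (tight_cost k c)"
    using assms by (simp add: normalized_nonneg_def tight_cost_def)
  moreover have "parallel_edges k \<subseteq> {0..<k+2} \<times> {0..<k+2}"
    by (auto simp: parallel_edges_def top_edges_def bottom_edges_def)
  ultimately show ?thesis by (simp add: cut_instance_def)
qed

lemma min_st_cut_parallel:
  assumes "1 \<le> k" "0 \<le> c"
  shows "min_st_cut (parallel_edges k) 0 1 (tight_cost k c)
           (if c \<le> real k then top_edges k else bottom_edges k)"
    and "tight_cost k c (if c \<le> real k then top_edges k else bottom_edges k) = min c (real k)"
proof -
  have top: "st_cut (parallel_edges k) 0 1 (top_edges k)"
    and bottom: "st_cut (parallel_edges k) 0 1 (bottom_edges k)"
    unfolding st_cut_parallel_iff by (auto simp: parallel_edges_def top_edges_def bottom_edges_def)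
  have "tight_cost k c (top_edges k) = c"
    using assms(1) top_edges_Int_bottom_edges unfolding tight_cost_def by (auto simp: top_edges_def)
  moreover have "tight_cost k c (bottom_edges k) = real k"
    using tight_cost_bottom_subset card_bottom_edges by simp
  ultimately show cost: "tight_cost k c (if c \<le> real k then top_edges k else bottom_edges k)
      = min c (real k)" by simp
  have "min c (real k) \<le> tight_cost k c C" if cut: "st_cut (parallel_edges k) 0 1 C" for C
  proof (cases "C \<inter> top_edges k = {}")
    case True
    have "(v, 1) \<in> C" if "v \<in> {2..<k+2}" for v
      using cut True that unfolding st_cut_parallel_iff top_edges_def by blast
    then have "bottom_edges k \<subseteq> C" by (auto simp: bottom_edges_def)
    then show ?thesis using True card_bottom_edges by (simp add: tight_cost_def Int_absorb1)
  qed (simp add: tight_cost_def)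
  then show "min_st_cut (parallel_edges k) 0 1 (tight_cost k c)
           (if c \<le> real k then top_edges k else bottom_edges k)"
    unfolding min_st_cut_def cost using top bottom by simp
qed

lemma perturbed_product_le:
  fixes k \<epsilon> :: real
  assumes "0 < k"
  shows "(k - \<epsilon>) * (1 + \<epsilon> / k) \<le> k"
proof -
  have "(k - \<epsilon>) * (1 + \<epsilon> / k) = k - \<epsilon>\<^sup>2 / k"
    using assms by (simp add: field_simps power2_eq_square)
  then show ?thesis using assms by simp
qed

theorem greedy_cut_factor_tight:
  assumes "1 \<le> k" "0 < \<epsilon>"
  shows "\<exists>(V :: nat set) E s t f Cstar.
    cut_instance V E s t f \<and> min_st_cut E s t f Cstar \<and> f Cstar > 0 \<and>
    (\<exists>Ch. greedy_output E s t f Ch) \<and>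
    (\<forall>Ch. greedy_output E s t f Ch \<longrightarrow> card Ch = k \<and> f Ch \<ge> (real k - \<epsilon>) * f Cstar)"
proof -
  define c where "c = 1 + \<epsilon> / real k"
  define Cstar where "Cstar = (if c \<le> real k then top_edges k else bottom_edges k)"
  have k: "0 < real k" using assms(1) by simp
  then have c: "1 < c" using assms(2) by (simp add: c_def)
  then have "0 \<le> c" by simp
  note min_cut = min_st_cut_parallel[OF assms(1) this, folded Cstar_def]
  have "(real k - \<epsilon>) * min c (real k) \<le> real k"
  proof (cases "real k - \<epsilon> \<le> 0")
    case True
    then have "(real k - \<epsilon>) * min c (real k) \<le> 0" using c k by (intro mult_nonpos_nonneg) auto
    then show ?thesis using k by linarith
  next
    case False
    then have "(real k - \<epsilon>) * min c (real k) \<le> (real k - \<epsilon>) * c" by simp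
    also have "\<dots> \<le> real k" unfolding c_def using perturbed_product_le[OF k] .
    finally show ?thesis .
  qed
  then have bound: "(real k - \<epsilon>) * tight_cost k c Cstar \<le> real k"
    using min_cut(2) by simp
  have outputs: "greedy_output (parallel_edges k) 0 1 (tight_cost k c) Ch \<longleftrightarrow> Ch = bottom_edges k"
    for Ch using greedy_output_parallel_iff[OF c] .
  show ?thesis
  proof (rule exI[of _ "{0..<k+2}"], rule exI[of _ "parallel_edges k"], rule exI[of _ 0],
      rule exI[of _ 1], rule exI[of _ "tight_cost k c"], rule exI[of _ Cstar], intro conjI allI impI)
    show "cut_instance {0..<k+2} (parallel_edges k) 0 1 (tight_cost k c)"
      using cut_instance_parallel \<open>0 \<le> c\<close> .
    show "min_st_cut (parallel_edges k) 0 1 (tight_cost k c) Cstar" by (rule min_cut(1))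
    show "0 < tight_cost k c Cstar" using min_cut(2) k c by simp
    show "\<exists>Ch. greedy_output (parallel_edges k) 0 1 (tight_cost k c) Ch" using outputs by blast
    fix Ch
    assume "greedy_output (parallel_edges k) 0 1 (tight_cost k c) Ch"
    then have Ch: "Ch = bottom_edges k" using outputs by blast
    then show "card Ch = k" by (simp add: card_bottom_edges)
    show "(real k - \<epsilon>) * tight_cost k c Cstar \<le> tight_cost k c Ch"
      using bound Ch tight_cost_bottom_subset card_bottom_edges by simp
  qed
qed

theorem lemma8:
  shows
  "(\<forall>(V :: 'v set) E s t f Cstar Ch.
      cut_instance V E s t f \<longrightarrow> min_st_cut E s t f Cstar \<longrightarrow> greedy_output E s t f Ch \<longrightarrow>
      f Ch \<le> real (card Ch) * f Cstar)
   \<and>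
   (\<forall>k :: nat. \<forall>\<epsilon> :: real. k \<ge> 1 \<longrightarrow> \<epsilon> > 0 \<longrightarrow>
      (\<exists>(V :: nat set) E s t f Cstar.
         cut_instance V E s t f \<and> min_st_cut E s t f Cstar \<and> f Cstar > 0 \<and>
         (\<exists>Ch. greedy_output E s t f Ch) \<and>
         (\<forall>Ch. greedy_output E s t f Ch \<longrightarrow>
                card Ch = k \<and> f Ch \<ge> (real k - \<epsilon>) * f Cstar)))"
  by (blast intro: greedy_cut_approximation greedy_cut_factor_tight)

end
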